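(* Let $f:\mathbb{R}^n\to\mathbb{R}$ be continuously differentiable, $\varphi:\mathbb{R}^n\to\mathbb{R}$ convex, $\psi=f+\varphi$, and $\Lambda$ symmetric positive definite. Each of the two maps (a) $g(x)=\psi'(x;d_s(x))\,d_s(x)$ and (b) $g(x)=F^{\Lambda}_{\mathrm{nat}}(x)$ has the following property: whenever $g(x)\neq0$, there exist $r,\epsilon>0$ such that $\|g(y)\|\ge\epsilon$ for all $y\in B_r(x)$.
   Context: $\|\cdot\|$ is the Euclidean norm and $B_r(x)$ the open ball. $\psi'(x;d)$ is the directional derivative, $\partial\psi(x)=\nabla f(x)+\partial\varphi(x)$; $d_s(x)=\arg\min_{\|d\|\le1}\psi'(x;d)$ if $0\notin\partial\psi(x)$ and $d_s(x)=0$ otherwise. $\mathrm{prox}^{\Lambda}_{\varphi}(z)=\arg\min_y\varphi(y)+\frac12(y-z)^T\Lambda(y-z)$ and $F^{\Lambda}_{\mathrm{nat}}(x)=x-\mathrm{prox}^{\Lambda}_{\varphi}(x-\Lambda^{-1}\nabla f(x))$. *)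

theory Defs
  imports "HOL-Analysis.Analysis"
begin

definition grad :: "(real^'n \<Rightarrow> real) \<Rightarrow> real^'n \<Rightarrow> real^'n" where
  "grad f x = (THE g. (f has_derivative (\<lambda>h. g \<bullet> h)) (at x))"

definition dir_deriv :: "(real^'n \<Rightarrow> real) \<Rightarrow> real^'n \<Rightarrow> real^'n \<Rightarrow> real" where
  "dir_deriv psi x d = Lim (at_right (0::real)) (\<lambda>t. (psi (x + t *\<^sub>R d) - psi x) / t)"

definition subdiff :: "(real^'n \<Rightarrow> real) \<Rightarrow> real^'n \<Rightarrow> (real^'n) set" where
  "subdiff phi x = {v. \<forall>y. phi y \<ge> phi x + v \<bullet> (y - x)}"

definition subdiff_psi :: "(real^'n \<Rightarrow> real) \<Rightarrow> (real^'n \<Rightarrow> real) \<Rightarrow> real^'n \<Rightarrow> (real^'n) set" where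
  "subdiff_psi f phi x = (\<lambda>v. grad f x + v) ` subdiff phi x"

definition steepest_dir :: "(real^'n \<Rightarrow> real) \<Rightarrow> (real^'n \<Rightarrow> real) \<Rightarrow> real^'n \<Rightarrow> real^'n" where
  "steepest_dir f phi x =
     (if 0 \<notin> subdiff_psi f phi x then
        (SOME d. norm d \<le> 1 \<and>
           (\<forall>e. norm e \<le> 1 \<longrightarrow> dir_deriv (\<lambda>y. f y + phi y) x d \<le> dir_deriv (\<lambda>y. f y + phi y) x e))
      else 0)"

definition prox :: "real^'n^'n \<Rightarrow> (real^'n \<Rightarrow> real) \<Rightarrow> real^'n \<Rightarrow> real^'n" where
  "prox L phi z = (SOME y. \<forall>w. phi y + (1/2) * ((y - z) \<bullet> (L *v (y - z)))
                              \<le> phi w + (1/2) * ((w - z) \<bullet> (L *v (w - z))))"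

definition F_nat :: "real^'n^'n \<Rightarrow> (real^'n \<Rightarrow> real) \<Rightarrow> (real^'n \<Rightarrow> real) \<Rightarrow> real^'n \<Rightarrow> real^'n" where
  "F_nat L f phi x = x - prox L phi (x - matrix_inv L *v grad f x)"

definition locally_bounded_away :: "(real^'n \<Rightarrow> real^'n) \<Rightarrow> bool" where
  "locally_bounded_away g \<longleftrightarrow>
     (\<forall>x. g x \<noteq> 0 \<longrightarrow> (\<exists>r>0. \<exists>\<epsilon>>0. \<forall>y\<in>ball x r. norm (g y) \<ge> \<epsilon>))"

end

theory Submission
  imports Defs
begin

text \<open>
  (a) If the steepest-descent field does not vanish at x, then 0 is not a subgradient of
  psi = f + phi at x, so some direction d has grad f(x) \<bullet> d + phi(x + d) - phi(x) < 0.
  This quantity is continuous in x and bounds psi'(y; d) from above, because difference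
  quotients of the convex phi decrease as t tends to 0 from above; hence
  psi'(y; d / norm d) \<le> -\<epsilon> near x. As psi'(y; -) is positively homogeneous, its minimiser
  d_s(y) over the unit ball then has norm one, and the field has norm at least \<epsilon> at y.

  (b) Adding the first-order optimality conditions of two scaled prox problems shows that
  the proximal map is Lipschitz, so F_nat is continuous, and a continuous map stays away
  from zero near every point where it does not vanish.
\<close>

lemma grad_has_derivative:
  fixes f :: "real^'n \<Rightarrow> real"
  assumes "f differentiable (at x)"
  shows "(f has_derivative (\<lambda>h. grad f x \<bullet> h)) (at x)"
proof -
  obtain D where D: "(f has_derivative D) (at x)"
    using assms by (auto simp: differentiable_def)
  have "D = (\<lambda>h. adjoint D 1 \<bullet> h)"
    using adjoint_works[OF has_derivative_linear[OF D], where y=1] by (auto simp: inner_commute)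
  with D have ex: "(f has_derivative (\<lambda>h. adjoint D 1 \<bullet> h)) (at x)" by simp
  have "grad f x = adjoint D 1"
    unfolding grad_def
  proof (rule the_equality[where P="\<lambda>g. (f has_derivative (\<lambda>h. g \<bullet> h)) (at x)", OF ex])
    fix g assume "(f has_derivative (\<lambda>h. g \<bullet> h)) (at x)"
    then show "g = adjoint D 1"
      using has_derivative_unique[OF _ ex] vector_eq_rdot by metis
  qed
  with ex show ?thesis by simp
qed

lemma dir_quotient_tendsto_grad:
  fixes f :: "real^'n \<Rightarrow> real"
  assumes "f differentiable (at y)"
  shows "((\<lambda>t. (f (y + t *\<^sub>R d) - f y) / t) \<longlongrightarrow> grad f y \<bullet> d) (at_right 0)"
proof -
  have line: "((\<lambda>t. y + t *\<^sub>R d) has_derivative (\<lambda>t. t *\<^sub>R d)) (at 0)"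
    by (auto intro!: derivative_eq_intros)
  have "(f has_derivative (\<lambda>h. grad f y \<bullet> h)) (at (y + 0 *\<^sub>R d))"
    using grad_has_derivative[OF assms] by simp
  from has_derivative_compose[OF line this]
  have "((\<lambda>t. f (y + t *\<^sub>R d)) has_field_derivative grad f y \<bullet> d) (at 0)"
    by (rule has_derivative_imp_has_field_derivative[unfolded o_def]) simp
  then show ?thesis
    unfolding DERIV_def by (auto intro: tendsto_mono[OF at_le])
qed

lemma convex_on_line:
  fixes phi :: "'a::real_vector \<Rightarrow> real"
  assumes "convex_on UNIV phi"
  shows "convex_on UNIV (\<lambda>t::real. phi (y + t *\<^sub>R d))"
proof (rule convex_onI)
  fix u a b :: real
  assume "0 < u" "u < 1"
  moreover have "y + ((1 - u) *\<^sub>R a + u *\<^sub>R b) *\<^sub>R d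
      = (1 - u) *\<^sub>R (y + a *\<^sub>R d) + u *\<^sub>R (y + b *\<^sub>R d)"
    by (simp add: algebra_simps)
  ultimately show "phi (y + ((1 - u) *\<^sub>R a + u *\<^sub>R b) *\<^sub>R d)
      \<le> (1 - u) * phi (y + a *\<^sub>R d) + u * phi (y + b *\<^sub>R d)"
    using convex_onD[OF assms, of u "y + a *\<^sub>R d" "y + b *\<^sub>R d"] by simp
qed (rule convex_UNIV)

lemma convex_diff_quotient_mono:
  fixes phi :: "'a::real_vector \<Rightarrow> real"
  assumes "convex_on UNIV phi" "0 < a" "a \<le> b"
  shows "(phi (y + a *\<^sub>R d) - phi y) / a \<le> (phi (y + b *\<^sub>R d) - phi y) / b"
proof (cases "a = b")
  case False
  with assms have "a < b" by simp
  from convex_on_slope_le(1)[OF convex_on_line[OF assms(1), of y d] _ _ \<open>0 < a\<close> this]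
  show ?thesis
    using assms(2) \<open>a < b\<close> by (simp add: divide_simps algebra_simps)
qed simp

lemma convex_diff_quotient_lower_bound:
  fixes phi :: "'a::real_vector \<Rightarrow> real"
  assumes "convex_on UNIV phi" "0 < a"
  shows "phi y - phi (y - d) \<le> (phi (y + a *\<^sub>R d) - phi y) / a"
proof -
  note slope = convex_on_slope_le[OF convex_on_line[OF assms(1)] UNIV_I UNIV_I, of "-1" 0 a]
  have "phi y - phi (y - d) \<le> (phi (y - d) - phi (y + a *\<^sub>R d)) / (-1 - a)"
    using slope(1) assms(2) by simp
  also have "\<dots> \<le> (phi (y + a *\<^sub>R d) - phi y) / a"
    using slope(2) assms(2) by (simp add: divide_simps algebra_simps)
  finally show ?thesis .
qed

lemma dir_deriv_eqI:
  fixes F :: "real^'n \<Rightarrow> real"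
  assumes "((\<lambda>t. (F (y + t *\<^sub>R d) - F y) / t) \<longlongrightarrow> a) (at_right 0)"
  shows "dir_deriv F y d = a"
  unfolding dir_deriv_def using tendsto_Lim[OF trivial_limit_at_right_real assms] .

lemma dir_quotient_tendsto_convex:
  fixes phi :: "real^'n \<Rightarrow> real"
  assumes "convex_on UNIV phi"
  shows "((\<lambda>t. (phi (y + t *\<^sub>R d) - phi y) / t) \<longlongrightarrow> dir_deriv phi y d) (at_right 0)"
proof -
  have "((\<lambda>t. (phi (y + t *\<^sub>R d) - phi y) / t) \<longlongrightarrow>
      Inf ((\<lambda>t. (phi (y + t *\<^sub>R d) - phi y) / t) ` ({0<..} \<inter> UNIV)))
      (at 0 within ({0<..} \<inter> UNIV))"
    by (rule Lim_right_bound[where K="phi y - phi (y - d)"])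
      (auto intro: convex_diff_quotient_mono[OF assms] convex_diff_quotient_lower_bound[OF assms])
  then obtain l where "((\<lambda>t. (phi (y + t *\<^sub>R d) - phi y) / t) \<longlongrightarrow> l) (at_right 0)"
    by auto
  with dir_deriv_eqI[OF this] show ?thesis by simp
qed

lemma dir_deriv_convex_le_diff:
  fixes phi :: "real^'n \<Rightarrow> real"
  assumes "convex_on UNIV phi"
  shows "dir_deriv phi y d \<le> phi (y + d) - phi y"
proof (rule tendsto_upperbound[OF dir_quotient_tendsto_convex[OF assms]])
  show "\<forall>\<^sub>F t in at_right 0. (phi (y + t *\<^sub>R d) - phi y) / t \<le> phi (y + d) - phi y"
    using eventually_at_right_real[of 0 1]
    by (rule eventually_mono) (use convex_diff_quotient_mono[OF assms, of _ 1 y d] in auto)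
qed simp

lemma dir_deriv_convex_ge_subgradient:
  fixes phi :: "real^'n \<Rightarrow> real"
  assumes "convex_on UNIV phi" "v \<in> subdiff phi y"
  shows "v \<bullet> d \<le> dir_deriv phi y d"
proof (rule tendsto_lowerbound[OF dir_quotient_tendsto_convex[OF assms(1)]])
  show "\<forall>\<^sub>F t in at_right 0. v \<bullet> d \<le> (phi (y + t *\<^sub>R d) - phi y) / t"
    using eventually_at_right_less
  proof (rule eventually_mono)
    fix t :: real
    assume "0 < t"
    have "t * (v \<bullet> d) \<le> phi (y + t *\<^sub>R d) - phi y"
      using assms(2) unfolding subdiff_def by (auto dest: spec[of _ "y + t *\<^sub>R d"])
    with \<open>0 < t\<close> show "v \<bullet> d \<le> (phi (y + t *\<^sub>R d) - phi y) / t"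
      by (simp add: pos_le_divide_eq mult.commute)
  qed
qed simp

lemma convex_on_dir_deriv:
  fixes phi :: "real^'n \<Rightarrow> real"
  assumes cv: "convex_on UNIV phi"
  shows "convex_on UNIV (dir_deriv phi y)"
proof (rule convex_onI)
  fix u :: real and a b :: "real^'n"
  assume u: "0 < u" "u < 1"
  let ?q = "\<lambda>d t. (phi (y + t *\<^sub>R d) - phi y) / t"
  have "\<forall>\<^sub>F t in at_right 0. ?q ((1 - u) *\<^sub>R a + u *\<^sub>R b) t \<le> (1 - u) * ?q a t + u * ?q b t"
    using eventually_at_right_less
  proof (rule eventually_mono)
    fix t :: real
    assume "0 < t"
    have "y + t *\<^sub>R ((1 - u) *\<^sub>R a + u *\<^sub>R b)
        = (1 - u) *\<^sub>R (y + t *\<^sub>R a) + u *\<^sub>R (y + t *\<^sub>R b)"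
      by (simp add: algebra_simps)
    then have "phi (y + t *\<^sub>R ((1 - u) *\<^sub>R a + u *\<^sub>R b)) - phi y
        \<le> (1 - u) * (phi (y + t *\<^sub>R a) - phi y) + u * (phi (y + t *\<^sub>R b) - phi y)"
      using convex_onD[OF cv, of u "y + t *\<^sub>R a" "y + t *\<^sub>R b"] u by (simp add: algebra_simps)
    with \<open>0 < t\<close> show "?q ((1 - u) *\<^sub>R a + u *\<^sub>R b) t \<le> (1 - u) * ?q a t + u * ?q b t"
      by (simp add: divide_right_mono add_divide_distrib[symmetric])
  qed
  moreover have "((\<lambda>t. (1 - u) * ?q a t + u * ?q b t)
      \<longlongrightarrow> (1 - u) * dir_deriv phi y a + u * dir_deriv phi y b) (at_right 0)"
    by (intro tendsto_intros dir_quotient_tendsto_convex[OF cv])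
  ultimately show "dir_deriv phi y ((1 - u) *\<^sub>R a + u *\<^sub>R b)
      \<le> (1 - u) * dir_deriv phi y a + u * dir_deriv phi y b"
    using tendsto_le[OF _ _ dir_quotient_tendsto_convex[OF cv]] by simp
qed (rule convex_UNIV)

lemma dir_quotient_tendsto_scaleR:
  fixes F :: "'a::real_vector \<Rightarrow> real"
  assumes "((\<lambda>t. (F (y + t *\<^sub>R d) - F y) / t) \<longlongrightarrow> a) (at_right 0)" "0 < c"
  shows "((\<lambda>t. (F (y + t *\<^sub>R (c *\<^sub>R d)) - F y) / t) \<longlongrightarrow> c * a) (at_right 0)"
proof -
  have "filterlim (\<lambda>t. c * t) (at_right 0) (at_right (0::real))"
    by (rule filterlim_times_pos[OF filterlim_ident assms(2)]) simp
  from tendsto_mult_left[OF filterlim_compose[OF assms(1) this], of c]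
  have "((\<lambda>t. c * ((F (y + (c * t) *\<^sub>R d) - F y) / (c * t))) \<longlongrightarrow> c * a) (at_right 0)" .
  moreover have "c * ((F (y + (c * t) *\<^sub>R d) - F y) / (c * t))
      = (F (y + t *\<^sub>R (c *\<^sub>R d)) - F y) / t" for t
    using assms(2) by (simp add: mult.commute)
  ultimately show ?thesis by simp
qed

lemma dir_quotient_tendsto_add:
  fixes f phi :: "real^'n \<Rightarrow> real"
  assumes "f differentiable (at y)" "convex_on UNIV phi"
  shows "((\<lambda>t. (f (y + t *\<^sub>R d) + phi (y + t *\<^sub>R d) - (f y + phi y)) / t)
           \<longlongrightarrow> grad f y \<bullet> d + dir_deriv phi y d) (at_right 0)"
  using tendsto_add[OF dir_quotient_tendsto_grad[OF assms(1)] dir_quotient_tendsto_convex[OF assms(2)]]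
  by (simp add: add_divide_distrib[symmetric] algebra_simps)

lemma dir_deriv_add_grad:
  fixes f phi :: "real^'n \<Rightarrow> real"
  assumes "f differentiable (at y)" "convex_on UNIV phi"
  shows "dir_deriv (\<lambda>y. f y + phi y) y d = grad f y \<bullet> d + dir_deriv phi y d"
  by (rule dir_deriv_eqI) (use dir_quotient_tendsto_add[OF assms] in simp)

lemma dir_deriv_add_scaleR:
  fixes f phi :: "real^'n \<Rightarrow> real"
  assumes "f differentiable (at y)" "convex_on UNIV phi" "0 < c"
  shows "dir_deriv (\<lambda>y. f y + phi y) y (c *\<^sub>R d) = c * dir_deriv (\<lambda>y. f y + phi y) y d"
  using dir_deriv_eqI[OF dir_quotient_tendsto_scaleR[where F="\<lambda>y. f y + phi y",
        OF dir_quotient_tendsto_add[OF assms(1,2)] assms(3)]]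
  by (simp add: dir_deriv_add_grad[OF assms(1,2)])

lemma continuous_on_dir_deriv_add:
  fixes f phi :: "real^'n \<Rightarrow> real"
  assumes "f differentiable (at y)" "convex_on UNIV phi"
  shows "continuous_on UNIV (dir_deriv (\<lambda>y. f y + phi y) y)"
proof -
  have "continuous_on UNIV (dir_deriv phi y)"
    by (rule convex_on_continuous[OF open_UNIV convex_on_dir_deriv[OF assms(2)]])
  then have "continuous_on UNIV (\<lambda>d. grad f y \<bullet> d + dir_deriv phi y d)"
    by (intro continuous_intros)
  moreover have "dir_deriv (\<lambda>y. f y + phi y) y = (\<lambda>d. grad f y \<bullet> d + dir_deriv phi y d)"
    using dir_deriv_add_grad[OF assms] by (rule ext)
  ultimately show ?thesis by simp
qed

lemma dir_deriv_add_nonneg_if_stationary: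
  fixes f phi :: "real^'n \<Rightarrow> real"
  assumes "f differentiable (at y)" "convex_on UNIV phi" "0 \<in> subdiff_psi f phi y"
  shows "0 \<le> dir_deriv (\<lambda>y. f y + phi y) y d"
proof -
  from assms(3) have "- grad f y \<in> subdiff phi y"
    unfolding subdiff_psi_def by (auto simp: add_eq_0_iff)
  from dir_deriv_convex_ge_subgradient[OF assms(2) this, of d]
  show ?thesis by (simp add: dir_deriv_add_grad[OF assms(1,2)])
qed

lemma descent_direction_if_nonstationary:
  fixes f phi :: "real^'n \<Rightarrow> real"
  assumes "0 \<notin> subdiff_psi f phi x"
  obtains d where "grad f x \<bullet> d + phi (x + d) - phi x < 0"
proof -
  have "- grad f x \<notin> subdiff phi x"
    using assms unfolding subdiff_psi_def by force
  then obtain w where "phi w < phi x - grad f x \<bullet> (w - x)"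
    unfolding subdiff_def by (auto simp: not_le)
  then show ?thesis
    by (intro that[of "w - x"]) simp
qed

lemma steepest_dir_minimizes:
  fixes f phi :: "real^'n \<Rightarrow> real"
  assumes "f differentiable (at y)" "convex_on UNIV phi" "0 \<notin> subdiff_psi f phi y"
  shows "norm (steepest_dir f phi y) \<le> 1 \<and>
    (\<forall>e. norm e \<le> 1 \<longrightarrow>
      dir_deriv (\<lambda>y. f y + phi y) y (steepest_dir f phi y) \<le> dir_deriv (\<lambda>y. f y + phi y) y e)"
proof -
  let ?D = "dir_deriv (\<lambda>y. f y + phi y) y"
  have "\<exists>d\<in>cball 0 1. \<forall>e\<in>cball 0 1. ?D d \<le> ?D e"
    by (rule continuous_attains_inf[OF compact_cball])
      (auto intro: continuous_on_subset[OF continuous_on_dir_deriv_add[OF assms(1,2)]])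
  then have "\<exists>d. norm d \<le> 1 \<and> (\<forall>e. norm e \<le> 1 \<longrightarrow> ?D d \<le> ?D e)"
    by auto
  from someI_ex[OF this] show ?thesis
    using assms(3) unfolding steepest_dir_def by simp
qed

lemma pos_homogeneous_minimizer_norm_eq_1:
  fixes D :: "'a::real_normed_vector \<Rightarrow> real"
  assumes hom: "\<And>c d. 0 < c \<Longrightarrow> D (c *\<^sub>R d) = c * D d"
    and "norm s \<le> 1" and min: "\<And>e. norm e \<le> 1 \<Longrightarrow> D s \<le> D e" and "D s < 0"
  shows "norm s = 1"
proof -
  have "D 0 = 0"
    using hom[of 2 0] by simp
  with \<open>D s < 0\<close> have "0 < norm s" by auto
  then have "D s \<le> D ((1 / norm s) *\<^sub>R s)"
    by (intro min) simp
  also have "\<dots> = D s / norm s"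
    using hom \<open>0 < norm s\<close> by simp
  finally have "D s * norm s \<le> D s * 1"
    using \<open>0 < norm s\<close> by (simp add: pos_le_divide_eq)
  with \<open>D s < 0\<close> \<open>norm s \<le> 1\<close> show ?thesis
    by (simp add: mult_le_cancel_left)
qed

lemma norm_steepest_descent_ge:
  fixes f phi :: "real^'n \<Rightarrow> real"
  assumes fd: "f differentiable (at y)" and cv: "convex_on UNIV phi" and "0 < \<epsilon>" "d \<noteq> 0"
    and descent: "dir_deriv (\<lambda>y. f y + phi y) y d \<le> - \<epsilon> * norm d"
  shows "\<epsilon> \<le> norm (dir_deriv (\<lambda>y. f y + phi y) y (steepest_dir f phi y) *\<^sub>R steepest_dir f phi y)"
proof -
  let ?D = "dir_deriv (\<lambda>y. f y + phi y) y"
  define s where "s = steepest_dir f phi y"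
  have "?D ((1 / norm d) *\<^sub>R d) = ?D d / norm d"
    using dir_deriv_add_scaleR[OF fd cv, of "1 / norm d" d] \<open>d \<noteq> 0\<close> by simp
  also have "\<dots> \<le> - \<epsilon>"
    using descent \<open>d \<noteq> 0\<close> by (simp add: pos_divide_le_eq)
  finally have unit: "?D ((1 / norm d) *\<^sub>R d) \<le> - \<epsilon>" .
  have "0 \<notin> subdiff_psi f phi y"
  proof
    assume "0 \<in> subdiff_psi f phi y"
    from dir_deriv_add_nonneg_if_stationary[OF fd cv this, of "(1 / norm d) *\<^sub>R d"] unit \<open>0 < \<epsilon>\<close>
    show False by linarith
  qed
  then have s1: "norm s \<le> 1" and min: "\<And>e. norm e \<le> 1 \<Longrightarrow> ?D s \<le> ?D e"
    using steepest_dir_minimizes[OF fd cv] unfolding s_def by auto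
  have "?D s \<le> - \<epsilon>"
    using min[of "(1 / norm d) *\<^sub>R d"] unit \<open>d \<noteq> 0\<close> by simp
  moreover from this have "norm s = 1"
    using pos_homogeneous_minimizer_norm_eq_1[of ?D, OF dir_deriv_add_scaleR[OF fd cv] s1 min] \<open>0 < \<epsilon>\<close>
    by simp
  ultimately show ?thesis
    unfolding s_def by simp
qed

lemma continuous_on_UNIV_tendsto_nhds:
  assumes "continuous_on UNIV g"
  shows "(g \<longlongrightarrow> g x) (nhds x)"
  using assms by (simp add: continuous_on_def tendsto_at_iff_tendsto_nhds[symmetric])

lemma locally_bounded_awayI:
  assumes "\<And>x. g x \<noteq> 0 \<Longrightarrow> \<exists>\<epsilon>>0. \<forall>\<^sub>F y in nhds x. \<epsilon> \<le> norm (g y)"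
  shows "locally_bounded_away g"
  unfolding locally_bounded_away_def
proof (intro allI impI)
  fix x
  assume "g x \<noteq> 0"
  then obtain \<epsilon> r where "0 < \<epsilon>" "0 < r" and "\<And>y. dist y x < r \<Longrightarrow> \<epsilon> \<le> norm (g y)"
    using assms unfolding eventually_nhds_metric by blast
  then have "\<forall>y\<in>ball x r. \<epsilon> \<le> norm (g y)"
    by (simp add: dist_commute)
  with \<open>0 < \<epsilon>\<close> \<open>0 < r\<close> show "\<exists>r>0. \<exists>\<epsilon>>0. \<forall>y\<in>ball x r. \<epsilon> \<le> norm (g y)"
    by blast
qed

lemma locally_bounded_away_steepest_descent:
  fixes f phi :: "real^'n \<Rightarrow> real"
  assumes f_diff: "\<And>x. f differentiable (at x)" and f_C1: "continuous_on UNIV (grad f)"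
    and cv: "convex_on UNIV phi"
  shows "locally_bounded_away
           (\<lambda>x. dir_deriv (\<lambda>y. f y + phi y) x (steepest_dir f phi x) *\<^sub>R steepest_dir f phi x)"
proof (rule locally_bounded_awayI)
  let ?g = "\<lambda>y. dir_deriv (\<lambda>y. f y + phi y) y (steepest_dir f phi y) *\<^sub>R steepest_dir f phi y"
  fix x
  assume "?g x \<noteq> 0"
  then have "0 \<notin> subdiff_psi f phi x"
    unfolding steepest_dir_def by auto
  then obtain d where descent: "grad f x \<bullet> d + phi (x + d) - phi x < 0"
    by (rule descent_direction_if_nonstationary)
  define h where "h y = grad f y \<bullet> d + phi (y + d) - phi y" for y
  have "h x < 0" and "d \<noteq> 0"
    using descent unfolding h_def by auto
  have "continuous_on UNIV phi"
    by (rule convex_on_continuous[OF open_UNIV cv])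
  then have "continuous_on UNIV h"
    unfolding h_def
    by (intro continuous_intros f_C1 continuous_on_compose2[OF \<open>continuous_on UNIV phi\<close>]) auto
  then have near: "\<forall>\<^sub>F y in nhds x. h y < h x / 2"
    by (rule order_tendstoD[OF continuous_on_UNIV_tendsto_nhds]) (use \<open>h x < 0\<close> in simp)
  define \<epsilon> where "\<epsilon> = - h x / (2 * norm d)"
  have "0 < \<epsilon>"
    unfolding \<epsilon>_def using \<open>h x < 0\<close> \<open>d \<noteq> 0\<close> by (intro divide_pos_pos) auto
  moreover have "\<forall>\<^sub>F y in nhds x. \<epsilon> \<le> norm (?g y)"
    using near
  proof (rule eventually_mono)
    fix y
    assume "h y < h x / 2"
    have "dir_deriv (\<lambda>y. f y + phi y) y d \<le> h y"
      using dir_deriv_convex_le_diff[OF cv, of y d]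
      unfolding h_def dir_deriv_add_grad[OF f_diff cv] by linarith
    also have "\<dots> \<le> - \<epsilon> * norm d"
      using \<open>h y < h x / 2\<close> \<open>d \<noteq> 0\<close> unfolding \<epsilon>_def by simp
    finally show "\<epsilon> \<le> norm (?g y)"
      by (rule norm_steepest_descent_ge[OF f_diff cv \<open>0 < \<epsilon>\<close> \<open>d \<noteq> 0\<close>])
  qed
  ultimately show "\<exists>\<epsilon>>0. \<forall>\<^sub>F y in nhds x. \<epsilon> \<le> norm (?g y)"
    by blast
qed

lemma continuous_on_quadratic_form:
  fixes L :: "real^'n^'n"
  shows "continuous_on S (\<lambda>v. v \<bullet> (L *v v))"
  by (intro continuous_intros bounded_linear.continuous_on[OF matrix_vector_mul_bounded_linear])

lemma quadratic_form_add_scaleR: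
  fixes L :: "real^'n^'n"
  shows "(a + t *\<^sub>R b) \<bullet> (L *v (a + t *\<^sub>R b)) =
    a \<bullet> (L *v a) + t * (a \<bullet> (L *v b) + b \<bullet> (L *v a)) + t\<^sup>2 * (b \<bullet> (L *v b))"
  by (simp add: matrix_vector_right_distrib matrix_vector_mult_scaleR inner_add_left inner_add_right
      power2_eq_square algebra_simps)

lemma pos_def_quadratic_form_ge:
  fixes L :: "real^'n^'n"
  assumes pd: "\<And>v. v \<noteq> 0 \<Longrightarrow> 0 < v \<bullet> (L *v v)"
  obtains lam where "0 < lam" "\<And>v. lam * (norm v)\<^sup>2 \<le> v \<bullet> (L *v v)"
proof -
  obtain u where u: "u \<in> sphere 0 1" and min: "\<And>v. v \<in> sphere 0 1 \<Longrightarrow> u \<bullet> (L *v u) \<le> v \<bullet> (L *v v)"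
    using continuous_attains_inf[OF compact_sphere _ continuous_on_quadratic_form, of 0 1 L]
    by (auto simp: sphere_eq_empty)
  have "lam * (norm v)\<^sup>2 \<le> v \<bullet> (L *v v)" if "lam = u \<bullet> (L *v u)" for lam v
  proof (cases "v = 0")
    case False
    then have "lam \<le> (v /\<^sub>R norm v) \<bullet> (L *v (v /\<^sub>R norm v))"
      using that min[of "v /\<^sub>R norm v"] by simp
    also have "\<dots> = (v \<bullet> (L *v v)) / (norm v)\<^sup>2"
      by (simp add: matrix_vector_mult_scaleR power2_eq_square divide_inverse_commute)
    finally show ?thesis
      using False by (simp add: pos_le_divide_eq)
  qed simp
  moreover have "0 < u \<bullet> (L *v u)"
    using u by (intro pd) auto
  ultimately show ?thesis
    using that by blast
qed

lemma convex_on_ge_linear_decrease: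
  fixes phi :: "'a::euclidean_space \<Rightarrow> real"
  assumes cv: "convex_on UNIV phi"
  obtains M where "\<And>w. 1 \<le> norm (w - z) \<Longrightarrow> phi z - M * norm (w - z) \<le> phi w"
proof -
  have "continuous_on UNIV phi"
    by (rule convex_on_continuous[OF open_UNIV cv])
  moreover have "sphere z 1 \<noteq> {}"
    by (simp add: sphere_eq_empty)
  ultimately obtain v0 where v0: "\<And>v. v \<in> sphere z 1 \<Longrightarrow> phi v0 \<le> phi v"
    using continuous_attains_inf[OF compact_sphere _ continuous_on_subset[OF _ subset_UNIV]] by blast
  have "phi z - (phi z - phi v0) * norm (w - z) \<le> phi w" if "1 \<le> norm (w - z)" for w
  proof -
    define s where "s = norm (w - z)"
    with that have "1 \<le> s" by simp
    have "(1 - 1 / s) *\<^sub>R z + (1 / s) *\<^sub>R w = z + (1 / s) *\<^sub>R (w - z)"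
      by (simp add: algebra_simps)
    moreover have "z + (1 / s) *\<^sub>R (w - z) \<in> sphere z 1"
      using \<open>1 \<le> s\<close> unfolding s_def by (auto simp: dist_norm)
    ultimately have "phi v0 \<le> phi ((1 - 1 / s) *\<^sub>R z + (1 / s) *\<^sub>R w)"
      using v0 by simp
    also have "\<dots> \<le> (1 - 1 / s) * phi z + (1 / s) * phi w"
      using \<open>1 \<le> s\<close> by (intro convex_onD[OF cv]) auto
    finally have "s * phi v0 \<le> s * ((1 - 1 / s) * phi z + (1 / s) * phi w)"
      using \<open>1 \<le> s\<close> by (intro mult_left_mono) auto
    also have "\<dots> = (s - 1) * phi z + phi w"
      using \<open>1 \<le> s\<close> by (simp add: field_simps)
    finally show ?thesis
      unfolding s_def by (simp add: algebra_simps)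
  qed
  then show ?thesis
    using that by blast
qed

lemma prox_objective_coercive:
  fixes phi :: "real^'n \<Rightarrow> real" and L :: "real^'n^'n"
  assumes cv: "convex_on UNIV phi" and pd: "\<And>v. v \<noteq> 0 \<Longrightarrow> 0 < v \<bullet> (L *v v)"
  obtains R where "\<And>w. R < norm (w - z) \<Longrightarrow> phi z \<le> phi w + (1/2) * ((w - z) \<bullet> (L *v (w - z)))"
proof -
  obtain lam where lam: "0 < lam" "\<And>v. lam * (norm v)\<^sup>2 \<le> v \<bullet> (L *v v)"
    using pos_def_quadratic_form_ge[OF pd] by blast
  obtain M where M: "\<And>w. 1 \<le> norm (w - z) \<Longrightarrow> phi z - M * norm (w - z) \<le> phi w"
    using convex_on_ge_linear_decrease[OF cv] by blast
  have "phi z \<le> phi w + (1/2) * ((w - z) \<bullet> (L *v (w - z)))" if "max 1 (2 * M / lam) < norm (w - z)" for w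
  proof -
    define s where "s = norm (w - z)"
    have "1 \<le> s" and "2 * M \<le> lam * s"
      using that lam(1) unfolding s_def by (auto simp: pos_divide_less_eq mult.commute)
    then have "M * s \<le> (1/2) * (lam * s\<^sup>2)"
      using mult_right_mono[OF \<open>2 * M \<le> lam * s\<close>, of s] by (simp add: power2_eq_square)
    then show ?thesis
      using M[of w] lam(2)[of "w - z"] \<open>1 \<le> s\<close> unfolding s_def by linarith
  qed
  then show ?thesis
    using that by blast
qed

lemma prox_minimizes:
  fixes phi :: "real^'n \<Rightarrow> real" and L :: "real^'n^'n"
  assumes cv: "convex_on UNIV phi" and pd: "\<And>v. v \<noteq> 0 \<Longrightarrow> 0 < v \<bullet> (L *v v)"
  shows "phi (prox L phi z) + (1/2) * ((prox L phi z - z) \<bullet> (L *v (prox L phi z - z)))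
    \<le> phi w + (1/2) * ((w - z) \<bullet> (L *v (w - z)))"
proof -
  define H where "H w = phi w + (1/2) * ((w - z) \<bullet> (L *v (w - z)))" for w
  obtain R where R: "\<And>w. R < norm (w - z) \<Longrightarrow> H z \<le> H w"
    using prox_objective_coercive[OF cv pd, of z] unfolding H_def by auto
  have "continuous_on UNIV phi"
    by (rule convex_on_continuous[OF open_UNIV cv])
  then have "continuous_on UNIV H"
    unfolding H_def
    by (intro continuous_intros continuous_on_compose2[OF continuous_on_quadratic_form]) auto
  moreover have "cball z (max 0 R) \<noteq> {}"
    by simp
  ultimately obtain p where p: "\<And>w. w \<in> cball z (max 0 R) \<Longrightarrow> H p \<le> H w"
    using continuous_attains_inf[OF compact_cball _ continuous_on_subset[OF _ subset_UNIV]] by blast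
  have "H p \<le> H w" for w
  proof (cases "w \<in> cball z (max 0 R)")
    case False
    then have "H z \<le> H w"
      by (intro R) (simp add: dist_norm norm_minus_commute)
    moreover have "H p \<le> H z"
      by (intro p) simp
    ultimately show ?thesis by simp
  qed (rule p)
  then have "\<exists>p. \<forall>w. H p \<le> H w"
    by blast
  from someI_ex[OF this] show ?thesis
    unfolding prox_def H_def by blast
qed

lemma prox_objective_first_order:
  fixes phi :: "real^'n \<Rightarrow> real" and L :: "real^'n^'n"
  assumes cv: "convex_on UNIV phi"
    and min: "\<And>w. phi p + (1/2) * ((p - z) \<bullet> (L *v (p - z)))
                   \<le> phi w + (1/2) * ((w - z) \<bullet> (L *v (w - z)))"
  shows "0 \<le> phi w - phi p + (1/2) * ((p - z) \<bullet> (L *v (w - p)) + (w - p) \<bullet> (L *v (p - z)))"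
proof -
  define X where
    "X = phi w - phi p + (1/2) * ((p - z) \<bullet> (L *v (w - p)) + (w - p) \<bullet> (L *v (p - z)))"
  define K where "K = (1/2) * ((w - p) \<bullet> (L *v (w - p)))"
  have "0 \<le> X + t * K" if "0 < t" "t < 1" for t
  proof -
    have "phi (p + t *\<^sub>R (w - p)) \<le> (1 - t) * phi p + t * phi w"
      using convex_onD[OF cv, of t p w] that by (simp add: algebra_simps)
    moreover have "phi p + (1/2) * ((p - z) \<bullet> (L *v (p - z)))
        \<le> phi (p + t *\<^sub>R (w - p))
          + (1/2) * (((p - z) + t *\<^sub>R (w - p)) \<bullet> (L *v ((p - z) + t *\<^sub>R (w - p))))"
      using min[of "p + t *\<^sub>R (w - p)"] by (simp add: algebra_simps)
    ultimately have "0 \<le> t * X + t * (t * K)"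
      unfolding X_def K_def quadratic_form_add_scaleR by (simp add: power2_eq_square algebra_simps)
    with \<open>0 < t\<close> show ?thesis
      by (simp add: zero_le_mult_iff flip: distrib_left)
  qed
  then have "\<forall>\<^sub>F t in at_right 0. 0 \<le> X + t * K"
    using eventually_at_right_real[of 0 1] by (auto elim: eventually_mono)
  moreover have "((\<lambda>t. X + t * K) \<longlongrightarrow> X) (at_right 0)"
    by (auto intro!: tendsto_eq_intros)
  ultimately show ?thesis
    unfolding X_def by (intro tendsto_lowerbound) auto
qed

lemma lipschitz_prox:
  fixes phi :: "real^'n \<Rightarrow> real" and L :: "real^'n^'n"
  assumes cv: "convex_on UNIV phi" and pd: "\<And>v. v \<noteq> 0 \<Longrightarrow> 0 < v \<bullet> (L *v v)"
  obtains K where "K-lipschitz_on UNIV (prox L phi)"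
proof -
  obtain lam where lam: "0 < lam" "\<And>v. lam * (norm v)\<^sup>2 \<le> v \<bullet> (L *v v)"
    using pos_def_quadratic_form_ge[OF pd] by blast
  obtain C where "0 < C" and C: "\<And>a b. \<bar>a \<bullet> (L *v b)\<bar> \<le> norm a * norm b * C"
    using bounded_bilinear.pos_bounded[OF bounded_bilinear.comp[OF bounded_bilinear_inner
          bounded_linear_ident matrix_vector_mul_bounded_linear[of L]]] by auto
  have "norm (prox L phi z1 - prox L phi z2) \<le> C / lam * norm (z1 - z2)" for z1 z2
  proof -
    define p1 p2 where "p1 = prox L phi z1" and "p2 = prox L phi z2"
    define v e where "v = p1 - p2" and "e = z1 - z2"
    have "0 \<le> phi p2 - phi p1
        + (1/2) * ((p1 - z1) \<bullet> (L *v (p2 - p1)) + (p2 - p1) \<bullet> (L *v (p1 - z1)))"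
      unfolding p1_def by (rule prox_objective_first_order[OF cv prox_minimizes[OF cv pd]])
    moreover have "0 \<le> phi p1 - phi p2
        + (1/2) * ((p2 - z2) \<bullet> (L *v (p1 - p2)) + (p1 - p2) \<bullet> (L *v (p2 - z2)))"
      unfolding p2_def by (rule prox_objective_first_order[OF cv prox_minimizes[OF cv pd]])
    ultimately have "2 * (v \<bullet> (L *v v)) \<le> e \<bullet> (L *v v) + v \<bullet> (L *v e)"
      unfolding v_def e_def
      by (simp add: inner_diff_left inner_diff_right matrix_vector_mult_diff_distrib algebra_simps)
    also have "\<dots> \<le> 2 * (C * norm e * norm v)"
      using C[of e v] C[of v e] by (simp add: abs_le_iff algebra_simps)
    finally have "norm v * (lam * norm v) \<le> norm v * (C * norm e)"
      using lam(2)[of v] by (simp add: power2_eq_square algebra_simps)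
    then have "lam * norm v \<le> C * norm e"
      by (cases "v = 0") (use \<open>0 < C\<close> in auto)
    with lam(1) show ?thesis
      unfolding v_def e_def p1_def p2_def by (simp add: pos_le_divide_eq mult.commute)
  qed
  with \<open>0 < C\<close> lam(1) show ?thesis
    by (intro that[of "C / lam"] lipschitz_onI) (auto simp: dist_norm)
qed

lemma continuous_on_F_nat:
  fixes f phi :: "real^'n \<Rightarrow> real" and L :: "real^'n^'n"
  assumes "continuous_on UNIV (grad f)" "convex_on UNIV phi" "\<And>v. v \<noteq> 0 \<Longrightarrow> 0 < v \<bullet> (L *v v)"
  shows "continuous_on UNIV (F_nat L f phi)"
proof -
  obtain K where "K-lipschitz_on UNIV (prox L phi)"
    using lipschitz_prox[OF assms(2,3)] .
  then have prox: "continuous_on UNIV (prox L phi)"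
    by (rule lipschitz_on_continuous_on)
  show ?thesis
    unfolding F_nat_def[abs_def]
    by (intro continuous_intros continuous_on_compose2[OF prox] assms(1)
        bounded_linear.continuous_on[OF matrix_vector_mul_bounded_linear]) auto
qed

lemma locally_bounded_away_if_continuous:
  assumes "continuous_on UNIV g"
  shows "locally_bounded_away g"
proof (rule locally_bounded_awayI)
  fix x
  assume "g x \<noteq> 0"
  have "\<forall>\<^sub>F y in nhds x. norm (g x) / 2 < norm (g y)"
    by (rule order_tendstoD[OF tendsto_norm[OF continuous_on_UNIV_tendsto_nhds[OF assms]]])
      (use \<open>g x \<noteq> 0\<close> in simp)
  with \<open>g x \<noteq> 0\<close> show "\<exists>\<epsilon>>0. \<forall>\<^sub>F y in nhds x. \<epsilon> \<le> norm (g y)"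
    by (intro exI[of _ "norm (g x) / 2"]) (auto elim: eventually_mono)
qed

theorem lemma4p2:
  fixes f phi :: "real^'n \<Rightarrow> real" and L :: "real^'n^'n"
  assumes f_diff: "\<forall>x. f differentiable (at x)"
    and f_C1: "continuous_on UNIV (grad f)"
    and phi_convex: "convex_on UNIV phi"
    and L_sym: "transpose L = L"
    and L_pd: "\<forall>v. v \<noteq> 0 \<longrightarrow> v \<bullet> (L *v v) > 0"
  shows "locally_bounded_away
           (\<lambda>x. dir_deriv (\<lambda>y. f y + phi y) x (steepest_dir f phi x) *\<^sub>R steepest_dir f phi x)
       \<and> locally_bounded_away (F_nat L f phi)"
proof
  show "locally_bounded_away
      (\<lambda>x. dir_deriv (\<lambda>y. f y + phi y) x (steepest_dir f phi x) *\<^sub>R steepest_dir f phi x)"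
    using locally_bounded_away_steepest_descent[OF _ f_C1 phi_convex] f_diff by blast
  show "locally_bounded_away (F_nat L f phi)"
    using locally_bounded_away_if_continuous[OF continuous_on_F_nat[OF f_C1 phi_convex]] L_pd by blast
qed

end
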